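(* Let $p,q\ge0$ with $p+q<1$, let $\varepsilon>0$, let $h$ denote the binary entropy in nats, $h(x)=-x\log x-(1-x)\log(1-x)$, and put $\phi=\phi(p,q)=\frac{h(p)-h(q)}{1-p-q}$. Define \[ m_{\mathrm{COUNT}}=\frac{1}{D_{\mathrm{KL}}\big(q\,\|\,1/(1+e^{\phi})\big)}\;k\log(n/k). \] If $m\le(1-\varepsilon)m_{\mathrm{COUNT}}$, then no algorithm can recover $\sigma$ with high probability, for any (non-adaptive) test design with $m$ tests.
   Context: Noisy group testing model: $n$ individuals, $k\sim n^{\theta}$ infected for a fixed $\theta\in(0,1)$; the infection vector $\sigma\in\{0,1\}^n$ is uniformly random among vectors of Hamming weight $k$. Each of the $m$ tests is a pool of individuals; it is truly positive if the pool contains at least one infected individual and truly negative otherwise. The observed result of each test is obtained independently: a truly negative test is displayed positive with probability $p$, a truly positive test is displayed negative with probability $q$. The algorithm sees the test design and the displayed results. $\log$ is natural; $D_{\mathrm{KL}}(r\|s)=r\log(r/s)+(1-r)\log\frac{1-r}{1-s}$. "With high probability" means with probability tending to $1$ as $n\to\infty$. *)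

theory Defs
  imports "HOL-Analysis.Analysis"
begin

definition xlnx :: "real \<Rightarrow> real" where
  "xlnx x = (if x = 0 then 0 else x * ln x)"

definition bin_entropy :: "real \<Rightarrow> real" where
  "bin_entropy x = - xlnx x - xlnx (1 - x)"

definition DKL :: "real \<Rightarrow> real \<Rightarrow> real" where
  "DKL r s = (if r = 0 then 0 else r * ln (r / s))
           + (if r = 1 then 0 else (1 - r) * ln ((1 - r) / (1 - s)))"

definition phi :: "real \<Rightarrow> real \<Rightarrow> real" where
  "phi p q = (bin_entropy p - bin_entropy q) / (1 - p - q)"

definition m_count :: "real \<Rightarrow> real \<Rightarrow> nat \<Rightarrow> nat \<Rightarrow> real" where
  "m_count p q n k = 1 / DKL q (1 / (1 + exp (phi p q))) * real k * ln (real n / real k)"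

text \<open>Infection vectors: subsets of the n individuals {0..<n} of size k.\<close>
definition configs :: "nat \<Rightarrow> nat \<Rightarrow> nat set set" where
  "configs n k = {S. S \<subseteq> {..<n} \<and> card S = k}"

definition obs_prob :: "real \<Rightarrow> real \<Rightarrow> bool \<Rightarrow> bool \<Rightarrow> real" where
  "obs_prob p q tpos disp =
     (if tpos then (if disp then 1 - q else q) else (if disp then p else 1 - p))"

text \<open>Probability of displayed outcome Y (set of tests displayed positive,
  Y \<subseteq> {..<m}) given infected set \<sigma> and test design G (test i is pool G i).\<close>
definition outcome_prob :: "real \<Rightarrow> real \<Rightarrow> nat \<Rightarrow> (nat \<Rightarrow> nat set) \<Rightarrow> nat set \<Rightarrow> nat set \<Rightarrow> real" where
  "outcome_prob p q m G \<sigma> Y = (\<Prod>i<m. obs_prob p q (G i \<inter> \<sigma> \<noteq> {}) (i \<in> Y))"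

text \<open>Success probability of a (possibly randomised) decoder A: A Y \<sigma>' is the
  probability that A outputs \<sigma>' on displayed outcome Y; \<sigma> uniform on configs n k.\<close>
definition success_prob :: "real \<Rightarrow> real \<Rightarrow> nat \<Rightarrow> nat \<Rightarrow> nat \<Rightarrow> (nat \<Rightarrow> nat set)
    \<Rightarrow> (nat set \<Rightarrow> nat set \<Rightarrow> real) \<Rightarrow> real" where
  "success_prob p q n k m G A =
     (\<Sum>\<sigma>\<in>configs n k. \<Sum>Y\<in>Pow {..<m}. outcome_prob p q m G \<sigma> Y * A Y \<sigma>) / real (n choose k)"

text \<open>A valid randomised decoder (conditional distribution over outputs, sub-probability
  on the candidate configurations; mass elsewhere counts as failure).\<close>
definition valid_decoder :: "nat \<Rightarrow> nat \<Rightarrow> (nat set \<Rightarrow> nat set \<Rightarrow> real) \<Rightarrow> bool" where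
  "valid_decoder n k A \<longleftrightarrow> (\<forall>Y \<sigma>. 0 \<le> A Y \<sigma>) \<and> (\<forall>Y. (\<Sum>\<sigma>\<in>configs n k. A Y \<sigma>) \<le> 1)"

end

theory Submission
  imports Defs
begin

text \<open>Compare the law of the displayed outcomes under \<sigma> with the uninformative law under which
  every test is displayed positive independently with probability e^phi / (1 + e^phi).
  Under the uninformative law a decoder succeeds with probability at most
  1 / (n choose k) \<le> exp (- k ln (n / k)). On outcomes whose likelihood ratio exceeds e^\<gamma>
  a Chernoff bound of order t applies, and the moment of the likelihood ratio factorises
  over the tests. Each factor is at most exp (t (D + \<eta>)) for small t, where D is the
  divergence of the test's displayed law from the reference law; the choice of phi makes
  D = D(q || 1 / (1 + e^phi)) for truly positive and truly negative tests alike. With \<gamma> slightly below k ln (n / k) and m \<le> (1 - \<epsilon>) k ln (n / k) / D, both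
  contributions vanish as n \<rightarrow> \<infinity>, so the success probability tends to 0.\<close>

definition kl_summand :: "real \<Rightarrow> real \<Rightarrow> real" where
  "kl_summand a b = (if a = 0 then 0 else a * ln (a / b))"

lemma DKL_eq_kl_summand: "DKL r s = kl_summand r s + kl_summand (1 - r) (1 - s)"
  by (simp add: DKL_def kl_summand_def)

lemma DKL_complement: "DKL (1 - r) (1 - s) = DKL r s"
  by (simp add: DKL_eq_kl_summand)

lemma kl_summand_gt:
  fixes a b :: real
  assumes "0 \<le> a" "0 < b" "a \<noteq> b"
  shows "a - b < kl_summand a b"
proof (cases "a = 0")
  case True
  then show ?thesis using assms by (simp add: kl_summand_def)
next
  case False
  then have a: "0 < a" using assms by simp
  have "ln (b / a) \<noteq> b / a - 1"
    using ln_eq_minus_one[of "b / a"] a assms by auto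
  then have "ln (b / a) < b / a - 1"
    using ln_le_minus_one[of "b / a"] a assms by simp
  moreover have "ln (a / b) = - ln (b / a)"
    using a assms by (simp add: ln_div)
  ultimately have "a * (1 - b / a) < a * ln (a / b)"
    using a by (intro mult_strict_left_mono) auto
  moreover have "a * (1 - b / a) = a - b"
    using a by (simp add: field_simps)
  ultimately show ?thesis
    using a by (simp add: kl_summand_def)
qed

lemma DKL_pos:
  fixes r s :: real
  assumes "0 \<le> r" "r \<le> 1" "0 < s" "s < 1" "r \<noteq> s"
  shows "0 < DKL r s"
  using kl_summand_gt[of r s] kl_summand_gt[of "1 - r" "1 - s"] assms
  by (simp add: DKL_eq_kl_summand)

lemma DKL_eq_neg_bin_entropy:
  fixes r s :: real
  assumes "0 \<le> r" "r \<le> 1" "0 < s" "s < 1"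
  shows "DKL r s = - bin_entropy r - r * ln s - (1 - r) * ln (1 - s)"
  using assms
  by (auto simp: DKL_def bin_entropy_def xlnx_def ln_div right_diff_distrib)

lemma one_div_one_plus_exp_bounds:
  fixes x :: real
  shows "0 < 1 / (1 + exp x)" "1 / (1 + exp x) < 1"
  by (auto simp: add_pos_pos)

text \<open>Bern(q) and Bern(1 - p) are the displayed-negative laws of a truly positive and a truly
  negative test; phi is exactly what makes them equally far from Bern(s).\<close>

lemma DKL_logistic_phi_balance:
  fixes p q :: real
  assumes "0 \<le> p" "0 \<le> q" "p + q < 1"
  defines "s \<equiv> 1 / (1 + exp (phi p q))"
  shows "DKL (1 - p) s = DKL q s"
proof -
  have s: "0 < s" "s < 1"
    unfolding s_def by (fact one_div_one_plus_exp_bounds)+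
  have "0 < 1 + exp (phi p q)"
    by (simp add: add_pos_pos)
  then have "1 - s = exp (phi p q) * s"
    unfolding s_def by (simp add: field_simps)
  then have ln_s: "ln (1 - s) = phi p q + ln s"
    using s by (simp add: ln_mult)
  have "phi p q * (1 - p - q) = bin_entropy p - bin_entropy q"
    using assms(3) by (simp add: phi_def)
  moreover have "bin_entropy (1 - p) = bin_entropy p"
    by (simp add: bin_entropy_def)
  ultimately show ?thesis
    using assms(1-3) s by (simp add: DKL_eq_neg_bin_entropy ln_s algebra_simps)
qed

lemma DKL_logistic_phi_pos:
  fixes p q :: real
  assumes "0 \<le> p" "0 \<le> q" "p + q < 1"
  shows "0 < DKL q (1 / (1 + exp (phi p q)))"
proof -
  define s where "s = 1 / (1 + exp (phi p q))"
  have s: "0 < s" "s < 1"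
    unfolding s_def by (fact one_div_one_plus_exp_bounds)+
  consider "q \<noteq> s" | "1 - p \<noteq> s"
    using assms by linarith
  then have "0 < DKL q s"
  proof cases
    case 2
    then have "0 < DKL (1 - p) s"
      using assms s by (intro DKL_pos) auto
    then show ?thesis
      using DKL_logistic_phi_balance[OF assms] unfolding s_def by simp
  qed (use assms s in \<open>auto intro: DKL_pos\<close>)
  then show ?thesis unfolding s_def .
qed

text \<open>The moment E[(dP/dQ)^t] of the likelihood ratio for P = Bern(r) and Q = Bern(s).\<close>

definition bin_renyi_moment :: "real \<Rightarrow> real \<Rightarrow> real \<Rightarrow> real" where
  "bin_renyi_moment r s t = r * (r / s) powr t + (1 - r) * ((1 - r) / (1 - s)) powr t"

lemma bin_renyi_moment_nonneg:
  "0 \<le> r \<Longrightarrow> r \<le> 1 \<Longrightarrow> 0 \<le> bin_renyi_moment r s t"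
  by (simp add: bin_renyi_moment_def)

lemma has_real_derivative_tilted_at_0:
  fixes a b :: real
  assumes "0 \<le> a" "0 < b"
  shows "((\<lambda>t. a * (a / b) powr t) has_real_derivative kl_summand a b) (at 0)"
proof (cases "a = 0")
  case True
  then show ?thesis by (simp add: kl_summand_def)
next
  case False
  then have "(\<lambda>t. a * (a / b) powr t) = (\<lambda>t. a * exp (t * ln (a / b)))"
    using assms by (simp add: powr_def)
  moreover have "((\<lambda>t. a * exp (t * ln (a / b))) has_real_derivative a * (exp (0 * ln (a / b)) * (1 * ln (a / b)))) (at 0)"
    by (intro DERIV_cmult DERIV_fun_exp DERIV_cmult_right DERIV_ident)
  ultimately show ?thesis
    using False by (simp add: kl_summand_def)
qed

lemma bin_renyi_moment_0:
  fixes r s :: real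
  assumes "0 \<le> r" "r \<le> 1" "0 < s" "s < 1"
  shows "bin_renyi_moment r s 0 = 1"
  using assms by (auto simp: bin_renyi_moment_def)

lemma bin_renyi_moment_has_derivative_DKL:
  fixes r s :: real
  assumes "0 \<le> r" "r \<le> 1" "0 < s" "s < 1"
  shows "(bin_renyi_moment r s has_real_derivative DKL r s) (at 0)"
  unfolding bin_renyi_moment_def[abs_def] DKL_eq_kl_summand
  using assms by (intro DERIV_add has_real_derivative_tilted_at_0) auto

lemma eventually_bin_renyi_moment_le_exp:
  fixes r s c :: real
  assumes "0 \<le> r" "r \<le> 1" "0 < s" "s < 1" "DKL r s < c"
  shows "\<forall>\<^sub>F t in at_right 0. bin_renyi_moment r s t \<le> exp (t * c)"
proof -
  let ?f = "bin_renyi_moment r s"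
  have "((\<lambda>t. (?f t - ?f 0) / (t - 0)) \<longlongrightarrow> DKL r s) (at 0)"
    using bin_renyi_moment_has_derivative_DKL[OF assms(1-4)] by (simp add: has_field_derivative_iff)
  then have "((\<lambda>t. (?f t - 1) / t) \<longlongrightarrow> DKL r s) (at_right 0)"
    using bin_renyi_moment_0[OF assms(1-4)] by (simp add: filterlim_at_split)
  then have "\<forall>\<^sub>F t in at_right 0. (?f t - 1) / t < c"
    using assms(5) by (rule order_tendstoD(2))
  then show ?thesis
    using eventually_at_right_less[of 0]
  proof eventually_elim
    case (elim t)
    then have "?f t \<le> 1 + t * c" by (simp add: pos_divide_less_eq algebra_simps)
    also have "\<dots> \<le> exp (t * c)" by (rule exp_ge_add_one_self)
    finally show ?case .
  qed
qed

lemma obs_prob_False: "obs_prob p q x False = 1 - obs_prob p q x True"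
  by (simp add: obs_prob_def)

lemma exists_renyi_order_obs_prob:
  fixes p q s c :: real
  assumes "0 \<le> p" "p \<le> 1" "0 \<le> q" "q \<le> 1" "0 < s" "s < 1"
    and "DKL (1 - q) s < c" "DKL p s < c"
  shows "\<exists>t>0. \<forall>x. bin_renyi_moment (obs_prob p q x True) s t \<le> exp (t * c)"
proof -
  have "\<forall>\<^sub>F t in at_right 0. 0 < t \<and> bin_renyi_moment (1 - q) s t \<le> exp (t * c)
      \<and> bin_renyi_moment p s t \<le> exp (t * c)"
    using eventually_at_right_less[of 0] assms
    by (intro eventually_conj eventually_bin_renyi_moment_le_exp) auto
  then obtain t where "0 < t" "bin_renyi_moment (1 - q) s t \<le> exp (t * c)"
      "bin_renyi_moment p s t \<le> exp (t * c)"
    using eventually_happens'[OF trivial_limit_at_right_real] by blast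
  then show ?thesis
    by (intro exI[of _ t]) (auto simp: obs_prob_def)
qed

lemma sum_Pow_prod_bool:
  fixes g :: "nat \<Rightarrow> bool \<Rightarrow> 'a :: comm_semiring_1"
  shows "(\<Sum>Y\<in>Pow {..<m}. \<Prod>i<m. g i (i \<in> Y)) = (\<Prod>i<m. g i True + g i False)"
proof -
  have "(\<Prod>i<m. g i True + g i False) =
      (\<Sum>Y\<in>Pow {..<m}. (\<Prod>i\<in>Y. g i True) * (\<Prod>i\<in>{..<m} - Y. g i False))"
    by (rule prod_add) simp
  also have "\<dots> = (\<Sum>Y\<in>Pow {..<m}. \<Prod>i<m. g i (i \<in> Y))"
  proof (rule sum.cong)
    fix Y assume "Y \<in> Pow {..<m}"
    then have "(\<Prod>i<m. g i (i \<in> Y)) = (\<Prod>i\<in>{..<m} - Y. g i (i \<in> Y)) * (\<Prod>i\<in>Y. g i (i \<in> Y))"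
      by (intro prod.subset_diff) auto
    also have "\<dots> = (\<Prod>i\<in>{..<m} - Y. g i False) * (\<Prod>i\<in>Y. g i True)"
      by (intro arg_cong2[where f = "(*)"] prod.cong) auto
    finally show "(\<Prod>i\<in>Y. g i True) * (\<Prod>i\<in>{..<m} - Y. g i False) = (\<Prod>i<m. g i (i \<in> Y))"
      by (simp add: mult.commute)
  qed simp
  finally show ?thesis ..
qed

definition iid_outcome_prob :: "real \<Rightarrow> nat \<Rightarrow> nat set \<Rightarrow> real" where
  "iid_outcome_prob s m Y = (\<Prod>i<m. if i \<in> Y then s else 1 - s)"

lemma iid_outcome_prob_pos: "0 < s \<Longrightarrow> s < 1 \<Longrightarrow> 0 < iid_outcome_prob s m Y"
  by (simp add: iid_outcome_prob_def prod_pos)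

lemma sum_iid_outcome_prob: "(\<Sum>Y\<in>Pow {..<m}. iid_outcome_prob s m Y) = 1"
  using sum_Pow_prod_bool[of "\<lambda>i b. if b then s else 1 - s" m]
  by (simp add: iid_outcome_prob_def)

lemma finite_configs: "finite (configs n k)"
  unfolding configs_def by (rule finite_subset[of _ "Pow {..<n}"]) auto

lemma card_configs: "card (configs n k) = n choose k"
  unfolding configs_def using n_subsets[of "{..<n}" k] by simp

lemma valid_decoder_le_1:
  assumes "valid_decoder n k A" "\<sigma> \<in> configs n k"
  shows "A Y \<sigma> \<le> 1"
proof -
  have "A Y \<sigma> \<le> (\<Sum>\<sigma>'\<in>configs n k. A Y \<sigma>')"
    using assms finite_configs by (intro member_le_sum) (auto simp: valid_decoder_def)
  also have "\<dots> \<le> 1"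
    using assms(1) by (simp add: valid_decoder_def)
  finally show ?thesis .
qed

text \<open>Outcomes carrying no information about \<sigma> let a decoder guess right with total mass
  at most one, i.e. with probability at most 1 / (n choose k).\<close>

lemma sum_iid_outcome_decoder_le_1:
  assumes "valid_decoder n k A" "0 < s" "s < 1"
  shows "(\<Sum>\<sigma>\<in>configs n k. \<Sum>Y\<in>Pow {..<m}. iid_outcome_prob s m Y * A Y \<sigma>) \<le> 1"
proof -
  have "(\<Sum>\<sigma>\<in>configs n k. \<Sum>Y\<in>Pow {..<m}. iid_outcome_prob s m Y * A Y \<sigma>)
      = (\<Sum>Y\<in>Pow {..<m}. iid_outcome_prob s m Y * (\<Sum>\<sigma>\<in>configs n k. A Y \<sigma>))"
    by (simp add: sum.swap[of _ "configs n k"] sum_distrib_left)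
  also have "\<dots> \<le> (\<Sum>Y\<in>Pow {..<m}. iid_outcome_prob s m Y)"
    using assms iid_outcome_prob_pos[of s m]
    by (intro sum_mono mult_right_le_one_le) (auto simp: valid_decoder_def intro: sum_nonneg less_imp_le)
  finally show ?thesis by (simp add: sum_iid_outcome_prob)
qed

lemma sum_tilted_outcome_prob_le:
  fixes p q s t B :: real
  assumes "0 \<le> p" "p \<le> 1" "0 \<le> q" "q \<le> 1"
    and moment: "\<And>x. bin_renyi_moment (obs_prob p q x True) s t \<le> B"
  shows "(\<Sum>Y\<in>Pow {..<m}. outcome_prob p q m G \<sigma> Y
           * (outcome_prob p q m G \<sigma> Y / iid_outcome_prob s m Y) powr t) \<le> B ^ m"
proof -
  define f where "f i = obs_prob p q (G i \<inter> \<sigma> \<noteq> {})" for i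
  define Q :: "bool \<Rightarrow> real" where "Q b = (if b then s else 1 - s)" for b
  define g where "g i b = f i b * (f i b / Q b) powr t" for i b
  have "outcome_prob p q m G \<sigma> Y * (outcome_prob p q m G \<sigma> Y / iid_outcome_prob s m Y) powr t
      = (\<Prod>i<m. f i (i \<in> Y)) * (\<Prod>i<m. f i (i \<in> Y) / Q (i \<in> Y)) powr t" for Y
    by (simp only: outcome_prob_def iid_outcome_prob_def f_def Q_def prod_dividef)
  also have "\<dots> Y = (\<Prod>i<m. g i (i \<in> Y))" for Y
    by (simp only: g_def prod_powr_distrib prod.distrib)
  finally have "(\<Sum>Y\<in>Pow {..<m}. outcome_prob p q m G \<sigma> Y
           * (outcome_prob p q m G \<sigma> Y / iid_outcome_prob s m Y) powr t)
      = (\<Prod>i<m. g i True + g i False)"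
    by (simp add: sum_Pow_prod_bool)
  also have "\<dots> = (\<Prod>i<m. bin_renyi_moment (f i True) s t)"
    by (simp add: g_def Q_def f_def bin_renyi_moment_def obs_prob_False)
  also have "\<dots> \<le> (\<Prod>i<m. B)"
    using assms by (intro prod_mono conjI bin_renyi_moment_nonneg) (auto simp: f_def obs_prob_def)
  finally show ?thesis by simp
qed

lemma le_exp_mult_plus_tilted:
  fixes P Q \<gamma> t :: real
  assumes "0 \<le> P" "0 < Q" "0 < t"
  shows "P \<le> exp \<gamma> * Q + exp (- t * \<gamma>) * (P * (P / Q) powr t)"
proof (cases "P \<le> exp \<gamma> * Q")
  case True
  then show ?thesis using assms by (simp add: add_increasing2)
next
  case False
  then have "exp \<gamma> \<le> P / Q" using assms by (simp add: pos_le_divide_eq)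
  then have "exp \<gamma> powr t \<le> (P / Q) powr t" using assms by (intro powr_mono2) auto
  then have "1 \<le> exp (- t * \<gamma>) * (P / Q) powr t"
    by (simp add: powr_def exp_minus field_simps)
  then have "P * 1 \<le> P * (exp (- t * \<gamma>) * (P / Q) powr t)"
    using assms by (intro mult_left_mono) auto
  then show ?thesis using assms by (simp add: add_increasing algebra_simps)
qed

text \<open>Outcomes at most e^\<gamma> times likelier under \<sigma> than under iid_outcome_prob s m are
  charged to the latter; the remaining ones are controlled by the moment of order t.\<close>

lemma success_prob_le_change_of_measure:
  fixes p q s t \<gamma> B :: real
  assumes "0 \<le> p" "p \<le> 1" "0 \<le> q" "q \<le> 1" "0 < s" "s < 1" "0 < t"
    and "valid_decoder n k A" "k \<le> n"
    and "\<And>x. bin_renyi_moment (obs_prob p q x True) s t \<le> B"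
  shows "success_prob p q n k m G A \<le> exp \<gamma> / real (n choose k) + exp (- t * \<gamma>) * B ^ m"
proof -
  let ?C = "configs n k" and ?W = "Pow {..<m}"
  let ?P = "outcome_prob p q m G" and ?R = "iid_outcome_prob s m"
  define T where "T \<sigma> Y = ?P \<sigma> Y * (?P \<sigma> Y / ?R Y) powr t" for \<sigma> Y
  have P_nonneg: "0 \<le> ?P \<sigma> Y" for \<sigma> Y
    using assms by (auto simp: outcome_prob_def obs_prob_def intro: prod_nonneg)
  have A_nonneg: "0 \<le> A Y \<sigma>" for Y \<sigma>
    using assms(8) by (simp add: valid_decoder_def)
  have "(\<Sum>\<sigma>\<in>?C. \<Sum>Y\<in>?W. ?P \<sigma> Y * A Y \<sigma>)
      \<le> (\<Sum>\<sigma>\<in>?C. \<Sum>Y\<in>?W. (exp \<gamma> * ?R Y + exp (- t * \<gamma>) * T \<sigma> Y) * A Y \<sigma>)"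
    unfolding T_def using assms iid_outcome_prob_pos[of s m] P_nonneg A_nonneg
    by (intro sum_mono mult_right_mono le_exp_mult_plus_tilted) auto
  also have "\<dots> = exp \<gamma> * (\<Sum>\<sigma>\<in>?C. \<Sum>Y\<in>?W. ?R Y * A Y \<sigma>)
      + exp (- t * \<gamma>) * (\<Sum>\<sigma>\<in>?C. \<Sum>Y\<in>?W. T \<sigma> Y * A Y \<sigma>)"
    by (simp add: algebra_simps sum.distrib sum_distrib_left)
  also have "(\<Sum>\<sigma>\<in>?C. \<Sum>Y\<in>?W. ?R Y * A Y \<sigma>) \<le> 1"
    using assms by (intro sum_iid_outcome_decoder_le_1)
  also have "(\<Sum>\<sigma>\<in>?C. \<Sum>Y\<in>?W. T \<sigma> Y * A Y \<sigma>) \<le> (\<Sum>\<sigma>\<in>?C. \<Sum>Y\<in>?W. T \<sigma> Y)"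
    using assms P_nonneg valid_decoder_le_1 A_nonneg
    by (intro sum_mono mult_right_le_one_le) (auto simp: T_def)
  also have "\<dots> \<le> (\<Sum>\<sigma>\<in>?C. B ^ m)"
    unfolding T_def using assms by (intro sum_mono sum_tilted_outcome_prob_le) auto
  finally have "(\<Sum>\<sigma>\<in>?C. \<Sum>Y\<in>?W. ?P \<sigma> Y * A Y \<sigma>) \<le> exp \<gamma> + exp (- t * \<gamma>) * (real (n choose k) * B ^ m)"
    by (simp add: card_configs)
  moreover have "0 < real (n choose k)"
    using assms(9) by simp
  ultimately show ?thesis
    by (simp add: success_prob_def divide_simps algebra_simps)
qed

lemma ln_binomial_ge:
  assumes "0 < k" "k \<le> n"
  shows "real k * ln (real n / real k) \<le> ln (real (n choose k))"
proof -
  have "real k * ln (real n / real k) = ln ((real n / real k) ^ k)"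
    using assms by (simp add: ln_realpow)
  also have "\<dots> \<le> ln (real (n choose k))"
    using assms binomial_ge_n_over_k_pow_k[of k n] by (subst ln_le_cancel_iff) auto
  finally show ?thesis .
qed

lemma success_prob_le_exp_neg:
  fixes p q s t c \<delta> :: real
  assumes "0 \<le> p" "p \<le> 1" "0 \<le> q" "q \<le> 1" "0 < s" "s < 1" "0 < t"
    and "valid_decoder n k A" "0 < k" "k \<le> n"
    and "\<And>x. bin_renyi_moment (obs_prob p q x True) s t \<le> exp (t * c)"
  defines "L \<equiv> real k * ln (real n / real k)"
  assumes "real m * c \<le> (1 - 2 * \<delta>) * L"
  shows "success_prob p q n k m G A \<le> exp (- (\<delta> * L)) + exp (- (t * \<delta> * L))"
proof -
  define \<gamma> where "\<gamma> = (1 - \<delta>) * L"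
  have "success_prob p q n k m G A \<le> exp \<gamma> / real (n choose k) + exp (- t * \<gamma>) * exp (t * c) ^ m"
    using assms(1-11) by (intro success_prob_le_change_of_measure) auto
  also have "exp \<gamma> / real (n choose k) \<le> exp \<gamma> / exp L"
    using ln_binomial_ge[OF assms(9,10)] assms(10)
    by (intro divide_left_mono) (auto simp: L_def ln_ge_iff)
  also have "exp \<gamma> / exp L = exp (- (\<delta> * L))"
    by (simp add: \<gamma>_def exp_diff[symmetric] algebra_simps)
  also have "exp (- t * \<gamma>) * exp (t * c) ^ m = exp (t * (real m * c - \<gamma>))"
    by (simp add: exp_of_nat_mult[symmetric] exp_add[symmetric] algebra_simps)
  also have "\<dots> \<le> exp (- (t * \<delta> * L))"
  proof -
    have "t * (real m * c) \<le> t * ((1 - 2 * \<delta>) * L)"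
      using assms(7,13) by (intro mult_left_mono) auto
    then show ?thesis by (simp add: \<gamma>_def algebra_simps)
  qed
  finally show ?thesis by simp
qed

lemma below_m_count_slack:
  fixes p q \<epsilon> :: real
  assumes "0 \<le> p" "0 \<le> q" "p + q < 1" "0 \<le> \<epsilon>" "k \<le> n"
    and "real m \<le> (1 - \<epsilon>) * m_count p q n k"
  defines "C \<equiv> DKL q (1 / (1 + exp (phi p q)))"
  shows "real m * (C * (1 + \<epsilon>/2)) \<le> (1 - 2 * (\<epsilon>/4)) * (real k * ln (real n / real k))"
proof -
  define L where "L = real k * ln (real n / real k)"
  have C: "0 < C"
    unfolding C_def using assms(1-3) by (rule DKL_logistic_phi_pos)
  have L: "0 \<le> L"
    using assms(5) by (cases "k = 0") (auto simp: L_def le_divide_eq intro!: ln_ge_zero)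
  have "real m \<le> (1 - \<epsilon>) * (L / C)"
    using assms(6) by (simp add: m_count_def L_def C_def)
  then have "real m * C \<le> (1 - \<epsilon>) * L"
    using C by (simp add: field_simps)
  then have "real m * C * (1 + \<epsilon>/2) \<le> (1 - \<epsilon>) * L * (1 + \<epsilon>/2)"
    using assms(4) by (intro mult_right_mono) auto
  also have "\<dots> = (1 - \<epsilon>) * (1 + \<epsilon>/2) * L"
    by simp
  also have "\<dots> \<le> (1 - \<epsilon>/2) * L"
    using L by (intro mult_right_mono) (auto simp: algebra_simps)
  finally show ?thesis
    by (simp add: L_def algebra_simps)
qed

lemma sparse_regime:
  fixes \<theta> :: real and k :: "nat \<Rightarrow> nat"
  assumes "0 < \<theta>" "\<theta> < 1" and k: "(\<lambda>n. real (k n) / real n powr \<theta>) \<longlonglongrightarrow> 1"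
  shows "\<forall>\<^sub>F n in sequentially. 0 < k n \<and> k n \<le> n"
    and "filterlim (\<lambda>n. real (k n) * ln (real n / real (k n))) at_top sequentially"
proof -
  have powr_at_top: "filterlim (\<lambda>n. real n powr a) at_top sequentially" if "0 < a" for a :: real
    using that by (intro filterlim_compose[OF real_powr_at_top filterlim_real_sequentially])
  have "filterlim (\<lambda>n. real (k n) / real n powr \<theta> * real n powr \<theta>) at_top sequentially"
    using assms by (intro filterlim_tendsto_pos_mult_at_top[OF k] powr_at_top) auto
  moreover have "\<forall>\<^sub>F n in sequentially. real (k n) / real n powr \<theta> * real n powr \<theta> = real (k n)"
    using eventually_gt_at_top[of 0] by eventually_elim simp
  ultimately have k_at_top: "filterlim (\<lambda>n. real (k n)) at_top sequentially"
    by (rule filterlim_cong[OF refl refl, THEN iffD1, rotated])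
  have "(\<lambda>n. inverse (real (k n) / real n powr \<theta>)) \<longlonglongrightarrow> 1"
    using tendsto_inverse[OF k] by simp
  moreover have "0 < 1 - \<theta>"
    using assms by simp
  ultimately have "filterlim (\<lambda>n. inverse (real (k n) / real n powr \<theta>) * real n powr (1 - \<theta>)) at_top sequentially"
    by (intro filterlim_tendsto_pos_mult_at_top[OF _ zero_less_one] powr_at_top)
  moreover have "\<forall>\<^sub>F n in sequentially.
      inverse (real (k n) / real n powr \<theta>) * real n powr (1 - \<theta>) = real n / real (k n)"
    using eventually_gt_at_top[of 0] by eventually_elim (simp add: powr_diff field_simps)
  ultimately have ratio_at_top: "filterlim (\<lambda>n. real n / real (k n)) at_top sequentially"
    by (rule filterlim_cong[OF refl refl, THEN iffD1, rotated])
  show "\<forall>\<^sub>F n in sequentially. 0 < k n \<and> k n \<le> n"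
  proof -
    have "\<forall>\<^sub>F n in sequentially. 0 < real (k n) \<and> 1 < real n / real (k n)"
      using k_at_top ratio_at_top unfolding filterlim_at_top_dense by (intro eventually_conj) blast+
    then show ?thesis
      by eventually_elim (auto simp: less_divide_eq)
  qed
  show "filterlim (\<lambda>n. real (k n) * ln (real n / real (k n))) at_top sequentially"
    by (intro filterlim_at_top_mult_at_top k_at_top filterlim_compose[OF ln_at_top ratio_at_top])
qed

lemma tendsto_exp_neg_mult_at_top:
  fixes c :: real
  assumes "0 < c" "filterlim L at_top F"
  shows "((\<lambda>x. exp (- (c * L x))) \<longlongrightarrow> 0) F"
proof -
  have "filterlim (\<lambda>x. c * L x) at_top F"
    using assms by (intro filterlim_tendsto_pos_mult_at_top[OF tendsto_const])
  then show ?thesis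
    by (intro filterlim_compose[OF exp_at_bot]) (simp add: filterlim_uminus_at_top[symmetric])
qed

theorem theorem2p3:
  fixes \<theta> p q \<epsilon> :: real
    and k m :: "nat \<Rightarrow> nat"
    and G :: "nat \<Rightarrow> nat \<Rightarrow> nat set"
    and A :: "nat \<Rightarrow> nat set \<Rightarrow> nat set \<Rightarrow> real"
  assumes "0 < \<theta>" "\<theta> < 1"
    and "0 \<le> p" "0 \<le> q" "p + q < 1" "0 < \<epsilon>"
    and "(\<lambda>n. real (k n) / real n powr \<theta>) \<longlonglongrightarrow> 1"
    and "\<forall>\<^sub>F n in sequentially. real (m n) \<le> (1 - \<epsilon>) * m_count p q n (k n)"
    and "\<And>n. valid_decoder n (k n) (A n)"
  shows "\<not> ((\<lambda>n. success_prob p q n (k n) (m n) (G n) (A n)) \<longlonglongrightarrow> 1)"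
proof
  assume success: "(\<lambda>n. success_prob p q n (k n) (m n) (G n) (A n)) \<longlonglongrightarrow> 1"
  define s where "s = 1 / (1 + exp (phi p q))"
  define C where "C = DKL q s"
  define L where "L n = real (k n) * ln (real n / real (k n))" for n
  have s: "0 < 1 - s" "1 - s < 1"
    unfolding s_def using one_div_one_plus_exp_bounds by auto
  have "C < C * (1 + \<epsilon>/2)"
    using DKL_logistic_phi_pos[OF assms(3-5)] assms(6) by (simp add: C_def s_def)
  then obtain t where t: "0 < t"
    and moment: "\<forall>x. bin_renyi_moment (obs_prob p q x True) (1 - s) t \<le> exp (t * (C * (1 + \<epsilon>/2)))"
    using exists_renyi_order_obs_prob[of p q "1 - s"] DKL_logistic_phi_balance[OF assms(3-5)]
      DKL_complement[of q s] DKL_complement[of "1 - p" s] assms(3-5) s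
    unfolding C_def s_def by auto
  have "\<forall>\<^sub>F n in sequentially. success_prob p q n (k n) (m n) (G n) (A n)
      \<le> exp (- (\<epsilon>/4 * L n)) + exp (- (t * (\<epsilon>/4) * L n))"
    using sparse_regime(1)[OF assms(1,2,7)] assms(8)
  proof eventually_elim
    case (elim n)
    then show ?case
      using below_m_count_slack[OF assms(3-5), of \<epsilon> "k n" n "m n"] assms(3-6,9) s t moment
      unfolding L_def
      by (intro success_prob_le_exp_neg[where s = "1 - s" and c = "C * (1 + \<epsilon>/2)"])
        (auto simp: C_def s_def)
  qed
  moreover have "(\<lambda>n. exp (- (\<epsilon>/4 * L n)) + exp (- (t * (\<epsilon>/4) * L n))) \<longlonglongrightarrow> 0"
    using sparse_regime(2)[OF assms(1,2,7)] assms(6) t unfolding L_def[abs_def]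
    by (intro tendsto_add_zero tendsto_exp_neg_mult_at_top) auto
  ultimately have "1 \<le> (0::real)"
    using success by (intro tendsto_le[OF sequentially_bot]) auto
  then show False by simp
qed

end
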